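(* Let $H$ be a strong symplectic Hilbert space with signature $(\infty,\infty)$ and let $W\subseteq H$ be a maximal positive-definite subspace which is not maximally completely positive-definite. Then $W\cap W^{\perp_s}=0$, and $W\oplus W^{\perp_s}$ is a proper dense subspace of $H$.
   Context: All Hilbert spaces are complex and separable. A strong symplectic structure on a Hilbert space $H$ is a continuous sesquilinear form $[\cdot,\cdot]$ (linear in the first, conjugate-linear in the second variable) with $[y,x]=-\overline{[x,y]}$, non-degenerate, and such that $x\mapsto[\cdot,x]$ maps $H$ onto its dual. For $L\subseteq H$, $L^{\perp_s}=\{x:[x,y]=0\ \forall y\in L\}$. A closed subspace $L\subseteq H$ is maximal positive-definite if $-i[x,x]>0$ for every $0\ne x\in L$ and $L$ is not properly contained in a subspace with the same property; it is maximally completely positive-definite if moreover there is $c_L>0$ with $-i[x,x]\ge c_L\|x\|^2$ for all $x\in L$. If $L$ is maximally completely positive-definite then $H=L\oplus L^{\perp_s}$ and $(n_+,n_-)=(\dim L,\dim L^{\perp_s})$ is independent of $L$; this is the signature of $H$. *)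

theory Defs
  imports "HOL-Analysis.Analysis"
begin

text \<open>A complex separable Hilbert space is modelled as a real Hilbert space
(type of class real_inner + complete_space + second_countable_topology) together
with an orthogonal complex structure J (multiplication by i).
Complex scalar multiplication is (a + i b) x = a x + b (J x); the complex inner
product is x \<bullet> y + i (x \<bullet> J y), whose norm is the given norm.\<close>

definition complex_structure :: "('a::real_inner \<Rightarrow> 'a) \<Rightarrow> bool" where
  "complex_structure J \<longleftrightarrow> linear J \<and> (\<forall>x. J (J x) = - x) \<and> (\<forall>x y. J x \<bullet> J y = x \<bullet> y)"

definition csubspace :: "('a::real_inner \<Rightarrow> 'a) \<Rightarrow> 'a set \<Rightarrow> bool" where
  "csubspace J L \<longleftrightarrow> subspace L \<and> J ` L \<subseteq> L"

definition cdual :: "('a::real_normed_vector \<Rightarrow> 'a) \<Rightarrow> ('a \<Rightarrow> complex) \<Rightarrow> bool" where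
  "cdual J f \<longleftrightarrow> bounded_linear f \<and> (\<forall>x. f (J x) = \<i> * f x)"

definition strong_symplectic :: "('a::real_inner \<Rightarrow> 'a) \<Rightarrow> ('a \<Rightarrow> 'a \<Rightarrow> complex) \<Rightarrow> bool" where
  "strong_symplectic J \<omega> \<longleftrightarrow>
     bounded_bilinear \<omega>
   \<and> (\<forall>x y. \<omega> (J x) y = \<i> * \<omega> x y)
   \<and> (\<forall>x y. \<omega> x (J y) = - \<i> * \<omega> x y)
   \<and> (\<forall>x y. \<omega> y x = - cnj (\<omega> x y))
   \<and> (\<forall>x. (\<forall>y. \<omega> x y = 0) \<longrightarrow> x = 0)
   \<and> (\<forall>f. cdual J f \<longrightarrow> (\<exists>x. f = (\<lambda>y. \<omega> y x)))"

definition sperp :: "('a \<Rightarrow> 'a \<Rightarrow> complex) \<Rightarrow> 'a set \<Rightarrow> 'a set" where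
  "sperp \<omega> L = {x. \<forall>y\<in>L. \<omega> x y = 0}"

text \<open>positive-definite: -i[x,x] > 0 for nonzero x (note -i[x,x] is real by skewness)\<close>
definition pos_def :: "('a::real_vector \<Rightarrow> 'a \<Rightarrow> complex) \<Rightarrow> 'a set \<Rightarrow> bool" where
  "pos_def \<omega> L \<longleftrightarrow> (\<forall>x\<in>L. x \<noteq> 0 \<longrightarrow> - \<i> * \<omega> x x \<in> \<real> \<and> Re (- \<i> * \<omega> x x) > 0)"

definition max_pos_def :: "('a::real_inner \<Rightarrow> 'a) \<Rightarrow> ('a \<Rightarrow> 'a \<Rightarrow> complex) \<Rightarrow> 'a set \<Rightarrow> bool" where
  "max_pos_def J \<omega> L \<longleftrightarrow> csubspace J L \<and> closed L \<and> pos_def \<omega> L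
     \<and> \<not> (\<exists>M. csubspace J M \<and> closed M \<and> pos_def \<omega> M \<and> L \<subset> M)"

definition max_cpos_def :: "('a::real_inner \<Rightarrow> 'a) \<Rightarrow> ('a \<Rightarrow> 'a \<Rightarrow> complex) \<Rightarrow> 'a set \<Rightarrow> bool" where
  "max_cpos_def J \<omega> L \<longleftrightarrow> max_pos_def J \<omega> L
     \<and> (\<exists>c>0. \<forall>x\<in>L. Re (- \<i> * \<omega> x x) \<ge> c * (norm x)\<^sup>2)"

text \<open>infinite-dimensional (real and complex infinite dimensionality coincide)\<close>
definition inf_dim :: "'a::real_vector set \<Rightarrow> bool" where
  "inf_dim L \<longleftrightarrow> (\<exists>B\<subseteq>L. independent B \<and> infinite B)"

text \<open>signature (\<infinity>,\<infinity>): some (equivalently every) maximally completely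
positive-definite L has dim L = dim L^perp_s = \<infinity>\<close>
definition signature_inf_inf :: "('a::real_inner \<Rightarrow> 'a) \<Rightarrow> ('a \<Rightarrow> 'a \<Rightarrow> complex) \<Rightarrow> bool" where
  "signature_inf_inf J \<omega> \<longleftrightarrow>
     (\<exists>L. max_cpos_def J \<omega> L \<and> inf_dim L \<and> inf_dim (sperp \<omega> L))"

end

theory Submission
  imports Defs
begin

text \<open>Positive-definiteness makes W \<inter> W^perp trivial. Via the Riesz property of the strong
symplectic structure and the Hilbert projection theorem, a closed complex subspace contains its
double symplectic complement; so a vector symplectically orthogonal to W + W^perp lies in both W^perp
and W, hence vanishes, and W + W^perp is dense. If W + W^perp were all of H, writing x = w + v gives
[x, u] = [w, u] for u in W, and the polarization bound |[w, u]| \<le> Im [w, w] + Im [u, u] makes the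
functionals [-, u], for u in W with Im [u, u] \<le> 1, pointwise bounded. Uniform boundedness, together
with the bounded inverse of x \<mapsto> [-, x] (uniform boundedness again), then bounds that set in norm,
which says precisely that W is maximally completely positive-definite.\<close>

lemma bounded_linear_norm_le_from_ball:
  fixes g :: "'a::real_normed_vector \<Rightarrow> 'b::real_normed_vector"
  assumes "bounded_linear g" and "r > 0"
    and bound: "\<And>y. y \<in> ball x0 r \<Longrightarrow> norm (g y) \<le> k"
  shows "norm (g x) \<le> (4 * k / r) * norm x"
proof -
  interpret g: bounded_linear g by (rule assms(1))
  show ?thesis
  proof (cases "x = 0")
    case False
    define c where "c = r / (2 * norm x)"
    have c: "c > 0" and "norm (c *\<^sub>R x) < r"
      using \<open>r > 0\<close> False by (simp_all add: c_def)
    then have "norm (g (x0 + c *\<^sub>R x)) \<le> k" "norm (g x0) \<le> k"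
      using \<open>r > 0\<close> by (auto intro!: bound simp: dist_norm)
    moreover have "c * norm (g x) = norm (g (x0 + c *\<^sub>R x) - g x0)"
      using c by (simp add: g.add g.scaleR)
    ultimately have "c * norm (g x) \<le> 2 * k"
      using norm_triangle_ineq4[of "g (x0 + c *\<^sub>R x)" "g x0"] by linarith
    then show ?thesis
      using c False \<open>r > 0\<close> by (simp add: c_def field_simps)
  qed simp
qed

lemma uniform_boundedness:
  fixes f :: "'i \<Rightarrow> 'a::{real_normed_vector,complete_space} \<Rightarrow> 'b::real_normed_vector"
  assumes lin: "\<And>i. i \<in> I \<Longrightarrow> bounded_linear (f i)"
    and pointwise: "\<And>x. \<exists>B. \<forall>i\<in>I. norm (f i x) \<le> B"
  shows "\<exists>M. \<forall>i\<in>I. \<forall>x. norm (f i x) \<le> M * norm x"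
proof -
  define E where "E k = {x. \<forall>i\<in>I. norm (f i x) \<le> real k}" for k :: nat
  have "closed (E k)" for k
  proof -
    have "closed {x. norm (f i x) \<le> real k}" if "i \<in> I" for i
      using that by (intro closed_Collect_le continuous_intros linear_continuous_on lin)
    moreover have "E k = (\<Inter>i\<in>I. {x. norm (f i x) \<le> real k})"
      by (auto simp: E_def)
    ultimately show ?thesis by auto
  qed
  moreover have "\<Union>(range E) = UNIV"
  proof -
    have "\<exists>k. x \<in> E k" for x
      using pointwise[of x] real_arch_simple by (fastforce simp: E_def intro: order_trans)
    then show ?thesis by blast
  qed
  ultimately have "\<exists>k. interior (E k) \<noteq> {}"
    using Baire_category_alt[of euclidean "range E"]
    by (auto simp: completely_metrizable_space_euclidean)
  then obtain k x0 r where "r > 0" "ball x0 r \<subseteq> E k"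
    by (meson all_not_in_conv open_contains_ball open_interior interior_subset subset_trans)
  then have "norm (f i x) \<le> (4 * real k / r) * norm x" if "i \<in> I" for i x
    using that by (intro bounded_linear_norm_le_from_ball[OF lin]) (auto simp: E_def)
  then show ?thesis by blast
qed

lemma parallelogram_law:
  fixes a b :: "'a::real_inner"
  shows "(norm (a - b))\<^sup>2 = 2 * (norm a)\<^sup>2 + 2 * (norm b)\<^sup>2 - (norm (a + b))\<^sup>2"
  by (simp add: power2_norm_eq_inner inner_diff_left inner_diff_right inner_add_left
      inner_add_right inner_commute)

lemma convex_almost_closest_points_close:
  fixes S :: "'a::real_inner set"
  assumes "convex S" and "a \<in> S" and "b \<in> S" and "d \<ge> 0"
    and d_le: "\<And>y. y \<in> S \<Longrightarrow> d \<le> dist z y"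
  shows "(dist a b)\<^sup>2 + 4 * d\<^sup>2 \<le> 2 * (dist z a)\<^sup>2 + 2 * (dist z b)\<^sup>2"
proof -
  have "midpoint a b \<in> S"
    using midpoints_in_convex_hull[of a S b] assms(1-3) by (simp add: hull_same)
  moreover have "(z - a) + (z - b) = 2 *\<^sub>R (z - midpoint a b)"
    by (simp add: midpoint_def algebra_simps scaleR_2)
  ultimately have "2 * d \<le> norm ((z - a) + (z - b))"
    using d_le by (simp add: dist_norm)
  then have "4 * d\<^sup>2 \<le> (norm ((z - a) + (z - b)))\<^sup>2"
    using \<open>d \<ge> 0\<close> power_mono[of "2 * d" _ 2] by (simp add: power_mult_distrib)
  moreover have "(dist a b)\<^sup>2
      = 2 * (dist z a)\<^sup>2 + 2 * (dist z b)\<^sup>2 - (norm ((z - a) + (z - b)))\<^sup>2"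
    using parallelogram_law[of "z - a" "z - b"] by (simp add: dist_norm norm_minus_commute)
  ultimately show ?thesis
    by linarith
qed

lemma Cauchy_if_dist_sq_le_inverse:
  fixes m :: "nat \<Rightarrow> 'a::metric_space"
  assumes m_dist: "\<And>p q. (dist (m p) (m q))\<^sup>2 \<le> 2 * inverse (Suc p) + 2 * inverse (Suc q)"
  shows "Cauchy m"
proof (rule metric_CauchyI)
  fix e :: real
  assume "e > 0"
  then have "e\<^sup>2 / 4 > 0"
    by simp
  then obtain N where N: "inverse (Suc N) < e\<^sup>2 / 4"
    using reals_Archimedean by blast
  have "dist (m p) (m q) < e" if "p \<ge> N" "q \<ge> N" for p q
  proof -
    have "inverse (Suc p) \<le> inverse (Suc N)" "inverse (Suc q) \<le> inverse (Suc N)"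
      using that by (auto intro!: le_imp_inverse_le)
    then have "(dist (m p) (m q))\<^sup>2 < e\<^sup>2"
      using m_dist[of p q] N by linarith
    then show ?thesis
      using \<open>e > 0\<close> by (simp add: power_less_imp_less_base)
  qed
  then show "\<exists>N. \<forall>p\<ge>N. \<forall>q\<ge>N. dist (m p) (m q) < e"
    by blast
qed

lemma closest_point_exists_complete:
  fixes S :: "'a::{real_inner,complete_space} set"
  assumes "convex S" and "closed S" and "S \<noteq> {}"
  shows "\<exists>p\<in>S. \<forall>y\<in>S. dist z p \<le> dist z y"
proof -
  define d where "d = infdist z S"
  have "d \<ge> 0" by (simp add: d_def infdist_nonneg)
  have d_le: "d \<le> dist z y" if "y \<in> S" for y
    using that by (simp add: d_def infdist_le)
  have "\<exists>m\<in>S. (dist z m)\<^sup>2 < d\<^sup>2 + inverse (Suc n)" for n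
  proof -
    have "infdist z S < sqrt (d\<^sup>2 + inverse (Suc n))"
      using \<open>d \<ge> 0\<close> by (simp add: d_def real_less_rsqrt)
    then obtain m where "m \<in> S" "dist z m < sqrt (d\<^sup>2 + inverse (Suc n))"
      unfolding infdist_notempty[OF \<open>S \<noteq> {}\<close>]
      by (subst (asm) cINF_less_iff) (use \<open>S \<noteq> {}\<close> in \<open>auto intro: bdd_belowI[where m=0]\<close>)
    moreover have "(sqrt (d\<^sup>2 + inverse (Suc n)))\<^sup>2 = d\<^sup>2 + inverse (Suc n)"
      by simp
    ultimately show ?thesis
      by (metis power_strict_mono zero_le_dist zero_less_numeral)
  qed
  then obtain m where m: "\<And>n. m n \<in> S"
    and m_close: "\<And>n. (dist z (m n))\<^sup>2 < d\<^sup>2 + inverse (Suc n)"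
    by metis
  have "Cauchy m"
  proof (rule Cauchy_if_dist_sq_le_inverse)
    fix p q
    have "(dist (m p) (m q))\<^sup>2 + 4 * d\<^sup>2 \<le> 2 * (dist z (m p))\<^sup>2 + 2 * (dist z (m q))\<^sup>2"
      by (rule convex_almost_closest_points_close) (use \<open>convex S\<close> m \<open>d \<ge> 0\<close> d_le in auto)
    then show "(dist (m p) (m q))\<^sup>2 \<le> 2 * inverse (Suc p) + 2 * inverse (Suc q)"
      using m_close[of p] m_close[of q] by linarith
  qed
  then obtain p where lim: "m \<longlonglongrightarrow> p"
    using complete_UNIV by (auto simp: complete_def)
  have "p \<in> S"
    using \<open>closed S\<close> m lim closed_sequentially by blast
  have "(dist z p)\<^sup>2 \<le> d\<^sup>2"
  proof (rule LIMSEQ_le)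
    show "(\<lambda>n. (dist z (m n))\<^sup>2) \<longlonglongrightarrow> (dist z p)\<^sup>2"
      by (intro tendsto_intros lim)
    show "(\<lambda>n. d\<^sup>2 + inverse (Suc n)) \<longlonglongrightarrow> d\<^sup>2"
      using tendsto_add[OF tendsto_const LIMSEQ_inverse_real_of_nat] by simp
    show "\<exists>N. \<forall>n\<ge>N. (dist z (m n))\<^sup>2 \<le> d\<^sup>2 + inverse (Suc n)"
      by (intro exI[of _ 0] allI impI less_imp_le[OF m_close])
  qed
  then have "dist z p \<le> d"
    using \<open>d \<ge> 0\<close> by (rule power2_le_imp_le)
  then have "dist z p \<le> dist z y" if "y \<in> S" for y
    using d_le[OF that] by linarith
  then show ?thesis
    using \<open>p \<in> S\<close> by blast
qed

lemma closest_point_subspace_orthogonal: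
  fixes M :: "'a::real_inner set"
  assumes "subspace M" and "p \<in> M" and closest: "\<forall>y\<in>M. dist z p \<le> dist z y" and "m \<in> M"
  shows "m \<bullet> (z - p) = 0"
proof (rule ccontr)
  define y where "y = z - p"
  assume "m \<bullet> (z - p) \<noteq> 0"
  then have "m \<bullet> y \<noteq> 0" and "m \<noteq> 0"
    by (auto simp: y_def)
  define t where "t = (m \<bullet> y) / (norm m)\<^sup>2"
  have "p + t *\<^sub>R m \<in> M"
    using assms by (intro subspace_add subspace_scale) auto
  then have "norm y \<le> norm (y - t *\<^sub>R m)"
    using closest by (fastforce simp: y_def dist_norm algebra_simps)
  then have "(norm y)\<^sup>2 \<le> (norm (y - t *\<^sub>R m))\<^sup>2"
    by (simp add: power_mono)
  also have "\<dots> = (norm y)\<^sup>2 - 2 * t * (m \<bullet> y) + t\<^sup>2 * (norm m)\<^sup>2"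
    by (simp only: power2_norm_eq_inner)
      (simp add: inner_diff_left inner_diff_right inner_commute algebra_simps power2_eq_square)
  also have "\<dots> = (norm y)\<^sup>2 - (m \<bullet> y)\<^sup>2 / (norm m)\<^sup>2"
    using \<open>m \<noteq> 0\<close> by (simp add: t_def power2_eq_square field_simps)
  finally have "(m \<bullet> y)\<^sup>2 / (norm m)\<^sup>2 \<le> 0"
    by simp
  moreover have "(m \<bullet> y)\<^sup>2 / (norm m)\<^sup>2 > 0"
    using \<open>m \<bullet> y \<noteq> 0\<close> \<open>m \<noteq> 0\<close> by simp
  ultimately show False
    by simp
qed

lemma closed_subspace_orthogonal_witness:
  fixes M :: "'a::{real_inner,complete_space} set"
  assumes "subspace M" and "closed M" and "z \<notin> M"
  shows "\<exists>y. (\<forall>m\<in>M. m \<bullet> y = 0) \<and> z \<bullet> y \<noteq> 0"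
proof -
  obtain p where "p \<in> M" and closest: "\<forall>y\<in>M. dist z p \<le> dist z y"
    using closest_point_exists_complete[of M z] assms subspace_imp_convex subspace_0 by blast
  have orth: "\<forall>m\<in>M. m \<bullet> (z - p) = 0"
    using closest_point_subspace_orthogonal[OF \<open>subspace M\<close> \<open>p \<in> M\<close> closest] by blast
  have "z \<bullet> (z - p) = (z - p) \<bullet> (z - p)"
    using orth \<open>p \<in> M\<close> by (simp add: inner_diff_left)
  moreover have "z - p \<noteq> 0"
    using \<open>z \<notin> M\<close> \<open>p \<in> M\<close> by auto
  ultimately show ?thesis
    using orth by auto
qed

lemma subspace_closure:
  fixes S :: "'a::real_normed_vector set"
  assumes "subspace S"
  shows "subspace (closure S)"
proof -
  have "(\<lambda>(x, y). x + y) ` closure (S \<times> S) \<subseteq> closure S"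
  proof (rule image_closure_subset)
    show "continuous_on (closure (S \<times> S)) (\<lambda>(x, y). x + y)"
      by (simp add: split_def continuous_intros)
    show "(\<lambda>(x, y). x + y) ` (S \<times> S) \<subseteq> closure S"
      using assms by (auto intro: subsetD[OF closure_subset] subspace_add)
  qed simp
  then have "x + y \<in> closure S" if "x \<in> closure S" "y \<in> closure S" for x y
    using that by (force simp: closure_Times)
  moreover have "(\<lambda>x. c *\<^sub>R x) ` closure S \<subseteq> closure S" for c
  proof (rule image_closure_subset)
    show "(\<lambda>x. c *\<^sub>R x) ` S \<subseteq> closure S"
      using assms by (auto intro: subsetD[OF closure_subset] subspace_scale)
  qed (simp_all add: continuous_intros)
  moreover have "0 \<in> closure S"
    using assms subspace_0 closure_subset by blast
  ultimately show ?thesis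
    unfolding subspace_def by blast
qed

lemma complex_structure_bounded_linear:
  assumes "complex_structure J"
  shows "bounded_linear J"
proof -
  have "norm (J x) = norm x" for x
    using assms by (simp add: complex_structure_def norm_eq_sqrt_inner)
  then show ?thesis
    using assms by (intro bounded_linear_intro[where K=1])
      (auto simp: complex_structure_def linear_add linear_scale)
qed

lemma complex_structure_inner_skew:
  assumes "complex_structure J"
  shows "J x \<bullet> y = - (x \<bullet> J y)"
  using assms unfolding complex_structure_def by (metis inner_minus_left)

lemma csubspace_closure:
  assumes "complex_structure J" and "csubspace J S"
  shows "csubspace J (closure S)"
proof -
  have "J ` closure S \<subseteq> closure S"
  proof (rule image_closure_subset)
    show "continuous_on (closure S) J"
      using assms(1) by (intro linear_continuous_on complex_structure_bounded_linear)
    show "J ` S \<subseteq> closure S"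
      using assms(2) closure_subset by (auto simp: csubspace_def)
  qed simp
  then show ?thesis
    using assms subspace_closure by (auto simp: csubspace_def)
qed

definition cinner :: "('a::real_inner \<Rightarrow> 'a) \<Rightarrow> 'a \<Rightarrow> 'a \<Rightarrow> complex" where
  "cinner J x y = complex_of_real (x \<bullet> y) + \<i> * complex_of_real (x \<bullet> J y)"

lemma cdual_cinner:
  assumes "complex_structure J"
  shows "cdual J (\<lambda>x. cinner J x y)"
proof -
  have "bounded_linear (\<lambda>x. cinner J x y)"
    unfolding cinner_def
    by (intro bounded_linear_add bounded_linear_compose[OF bounded_linear_mult_right]
        bounded_linear_compose[OF bounded_linear_of_real bounded_linear_inner_left])
  moreover have "cinner J (J x) y = \<i> * cinner J x y" for x
    using assms complex_structure_inner_skew[OF assms, of x y]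
    by (simp add: cinner_def complex_structure_def complex_eq_iff)
  ultimately show ?thesis
    by (simp add: cdual_def)
qed

lemma strong_symplecticD:
  assumes "strong_symplectic J \<omega>"
  shows "bounded_bilinear \<omega>"
    and "\<omega> (J x) y = \<i> * \<omega> x y"
    and "\<omega> x (J y) = - \<i> * \<omega> x y"
    and "\<omega> y x = - cnj (\<omega> x y)"
    and "(\<And>y. \<omega> x y = 0) \<Longrightarrow> x = 0"
    and "cdual J f \<Longrightarrow> \<exists>a. f = (\<lambda>y. \<omega> y a)"
  using assms unfolding strong_symplectic_def by metis+

lemma sperp_iff:
  assumes "strong_symplectic J \<omega>"
  shows "x \<in> sperp \<omega> A \<longleftrightarrow> (\<forall>y\<in>A. \<omega> y x = 0)"
proof -
  have "\<omega> x y = 0 \<longleftrightarrow> \<omega> y x = 0" for y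
    using strong_symplecticD(4)[OF assms, of y x] by auto
  then show ?thesis
    by (simp add: sperp_def)
qed

lemma csubspace_sperp:
  assumes "strong_symplectic J \<omega>"
  shows "csubspace J (sperp \<omega> A)"
proof -
  interpret bounded_bilinear \<omega>
    using strong_symplecticD(1)[OF assms] .
  show ?thesis
    by (auto simp: csubspace_def subspace_def sperp_def zero_left add_left scaleR_left
        strong_symplecticD(2)[OF assms])
qed

lemma sperp_antimono:
  assumes "A \<subseteq> B"
  shows "sperp \<omega> B \<subseteq> sperp \<omega> A"
  using assms by (auto simp: sperp_def)

lemma csubspace_sums:
  assumes "complex_structure J" and "csubspace J A" and "csubspace J B"
  shows "csubspace J {x + y | x y. x \<in> A \<and> y \<in> B}"
proof -
  have "J (x + y) = J x + J y" for x y
    using assms(1) by (simp add: complex_structure_def linear_add)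
  then show ?thesis
    using assms(2,3) subspace_sums by (fastforce simp: csubspace_def)
qed

lemma strong_symplectic_separation:
  fixes J :: "'a::{real_inner,complete_space} \<Rightarrow> 'a"
  assumes cs: "complex_structure J" and ss: "strong_symplectic J \<omega>"
    and "csubspace J M" and "closed M" and "z \<notin> M"
  shows "\<exists>a\<in>sperp \<omega> M. \<omega> a z \<noteq> 0"
proof -
  have "subspace M"
    using \<open>csubspace J M\<close> by (simp add: csubspace_def)
  then obtain y where y: "\<forall>m\<in>M. m \<bullet> y = 0" and "z \<bullet> y \<noteq> 0"
    using closed_subspace_orthogonal_witness \<open>closed M\<close> \<open>z \<notin> M\<close> by blast
  obtain a where a: "\<And>x. cinner J x y = \<omega> x a"
    using strong_symplecticD(6)[OF ss cdual_cinner[OF cs]] by metis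
  have "\<omega> m a = 0" if "m \<in> M" for m
  proof -
    have "J m \<in> M"
      using \<open>csubspace J M\<close> that by (auto simp: csubspace_def)
    then have "m \<bullet> J y = 0"
      using y complex_structure_inner_skew[OF cs, of m y] by simp
    then show ?thesis
      using y that a[of m] by (simp add: cinner_def)
  qed
  moreover have "\<omega> z a \<noteq> 0"
    using \<open>z \<bullet> y \<noteq> 0\<close> a[of z] by (auto simp: cinner_def complex_eq_iff)
  ultimately show ?thesis
    using strong_symplecticD(4)[OF ss, of z a] by (auto simp: sperp_iff[OF ss])
qed

lemma sperp_sperp_subset:
  fixes J :: "'a::{real_inner,complete_space} \<Rightarrow> 'a"
  assumes "complex_structure J" and ss: "strong_symplectic J \<omega>"
    and "csubspace J W" and "closed W"
  shows "sperp \<omega> (sperp \<omega> W) \<subseteq> W"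
proof
  fix x
  assume x: "x \<in> sperp \<omega> (sperp \<omega> W)"
  show "x \<in> W"
  proof (rule ccontr)
    assume "x \<notin> W"
    then obtain a where "a \<in> sperp \<omega> W" "\<omega> a x \<noteq> 0"
      using strong_symplectic_separation assms by blast
    then show False
      using x by (auto simp: sperp_iff[OF ss])
  qed
qed

lemma pos_def_inter_sperp:
  assumes "strong_symplectic J \<omega>" and "subspace W" and "pos_def \<omega> W"
  shows "W \<inter> sperp \<omega> W = {0}"
proof -
  have "x = 0" if "x \<in> W" "x \<in> sperp \<omega> W" for x
    using that \<open>pos_def \<omega> W\<close> by (force simp: pos_def_def sperp_def)
  moreover have "0 \<in> W \<inter> sperp \<omega> W"
    using subspace_0 csubspace_sperp[OF assms(1), of W] assms(2) unfolding csubspace_def by blast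
  ultimately show ?thesis
    by blast
qed

lemma closure_sum_sperp_eq_UNIV:
  fixes J :: "'a::{real_inner,complete_space} \<Rightarrow> 'a"
  assumes cs: "complex_structure J" and ss: "strong_symplectic J \<omega>"
    and W: "csubspace J W" "closed W" and trivial: "W \<inter> sperp \<omega> W = {0}"
  shows "closure {w + v | w v. w \<in> W \<and> v \<in> sperp \<omega> W} = UNIV"
    (is "closure ?S = UNIV")
proof (rule ccontr)
  assume "closure ?S \<noteq> UNIV"
  then obtain z where "z \<notin> closure ?S"
    by blast
  have "csubspace J ?S"
    using csubspace_sums[OF cs W(1) csubspace_sperp[OF ss]] .
  then obtain a where a: "a \<in> sperp \<omega> (closure ?S)" and "\<omega> a z \<noteq> 0"
    using strong_symplectic_separation[OF cs ss csubspace_closure[OF cs]] \<open>z \<notin> closure ?S\<close>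
    by blast
  have "0 \<in> W" "0 \<in> sperp \<omega> W"
    using W(1) csubspace_sperp[OF ss] subspace_0 unfolding csubspace_def by blast+
  then have "W \<subseteq> closure ?S" "sperp \<omega> W \<subseteq> closure ?S"
    using closure_subset by force+
  then have "a \<in> sperp \<omega> W" "a \<in> sperp \<omega> (sperp \<omega> W)"
    using a sperp_antimono by blast+
  then have "a = 0"
    using sperp_sperp_subset[OF cs ss W] trivial by blast
  then show False
    using \<open>\<omega> a z \<noteq> 0\<close> bounded_bilinear.zero_left[OF strong_symplecticD(1)[OF ss]] by simp
qed

lemma pos_def_Im_pos:
  assumes "pos_def \<omega> W" and "x \<in> W" and "x \<noteq> 0"
  shows "Im (\<omega> x x) > 0"
  using assms by (force simp: pos_def_def)

lemma pos_def_Im_nonneg: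
  assumes "bounded_bilinear \<omega>" and "pos_def \<omega> W" and "x \<in> W"
  shows "Im (\<omega> x x) \<ge> 0"
proof (cases "x = 0")
  case True
  then show ?thesis
    using bounded_bilinear.zero_left[OF assms(1)] by simp
next
  case False
  then show ?thesis
    using pos_def_Im_pos[OF assms(2,3)] by simp
qed

lemma pos_def_norm_le_Im:
  assumes ss: "strong_symplectic J \<omega>" and "csubspace J W" and "pos_def \<omega> W"
    and w: "w \<in> W" and u: "u \<in> W"
  shows "norm (\<omega> w u) \<le> Im (\<omega> w w) + Im (\<omega> u u)"
proof -
  interpret B: bounded_bilinear \<omega>
    using strong_symplecticD(1)[OF ss] .
  note lJ = strong_symplecticD(2)[OF ss] and rJ = strong_symplecticD(3)[OF ss]
  have sk: "\<omega> u w = - cnj (\<omega> w u)"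
    using strong_symplecticD(4)[OF ss] .
  have nonneg: "Im (\<omega> x x) \<ge> 0" if "x \<in> W" for x
    using pos_def_Im_nonneg[OF B.bounded_bilinear_axioms \<open>pos_def \<omega> W\<close> that] .
  have "J u \<in> W"
    using \<open>csubspace J W\<close> u by (auto simp: csubspace_def)
  then have "Im (\<omega> (w + u) (w + u)) \<ge> 0" "Im (\<omega> (w - u) (w - u)) \<ge> 0"
    "Im (\<omega> (w + J u) (w + J u)) \<ge> 0" "Im (\<omega> (w - J u) (w - J u)) \<ge> 0"
    using \<open>csubspace J W\<close> w u nonneg
    by (auto intro!: nonneg simp: csubspace_def subspace_add subspace_diff)
  \<comment> \<open>expanding these four forms bounds Im [w, u] and Re [w, u] respectively\<close>
  then have "\<bar>Im (\<omega> w u)\<bar> \<le> (Im (\<omega> w w) + Im (\<omega> u u)) / 2"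
    and "\<bar>Re (\<omega> w u)\<bar> \<le> (Im (\<omega> w w) + Im (\<omega> u u)) / 2"
    by (simp_all add: B.add_left B.add_right B.diff_left B.diff_right lJ rJ sk)
  then show ?thesis
    using cmod_le[of "\<omega> w u"] by simp
qed

lemma strong_symplectic_bounded_inverse:
  fixes J :: "'a::{real_inner,complete_space} \<Rightarrow> 'a"
  assumes cs: "complex_structure J" and ss: "strong_symplectic J \<omega>"
  shows "\<exists>K. \<forall>x. (\<forall>y. norm (\<omega> y x) \<le> norm y) \<longrightarrow> norm x \<le> K"
proof -
  define F where "F = {x. \<forall>y. norm (\<omega> y x) \<le> norm y}"
  have "\<exists>M. \<forall>x\<in>F. \<forall>z. norm (x \<bullet> z) \<le> M * norm z"
  proof (rule uniform_boundedness)
    show "bounded_linear (\<lambda>z. x \<bullet> z)" for x :: 'a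
      by (rule bounded_linear_inner_right)
    fix z
    obtain a where a: "\<And>x. cinner J x z = \<omega> x a"
      using strong_symplecticD(6)[OF ss cdual_cinner[OF cs]] by metis
    have "norm (x \<bullet> z) \<le> norm a" if "x \<in> F" for x
    proof -
      have "norm (x \<bullet> z) \<le> norm (cinner J x z)"
        using abs_Re_le_cmod[of "cinner J x z"] by (simp add: cinner_def)
      also have "\<dots> = norm (\<omega> a x)"
        using a[of x] strong_symplecticD(4)[OF ss, of x a] by simp
      also have "\<dots> \<le> norm a"
        using that by (simp add: F_def)
      finally show ?thesis .
    qed
    then show "\<exists>B. \<forall>x\<in>F. norm (x \<bullet> z) \<le> B"
      by blast
  qed
  then obtain M where M: "\<And>x z. x \<in> F \<Longrightarrow> norm (x \<bullet> z) \<le> M * norm z"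
    by blast
  have "norm x \<le> max M 0" if "x \<in> F" for x
  proof (cases "x = 0")
    case False
    have "norm x * norm x \<le> M * norm x"
      using M[OF that, of x] by (simp add: norm_eq_sqrt_inner)
    then show ?thesis
      using False by simp
  qed simp
  then show ?thesis
    unfolding F_def by blast
qed

lemma coercive_if_bounded_sublevel:
  assumes "bounded_bilinear \<omega>" and "subspace W" and "pos_def \<omega> W"
    and bounded: "\<And>u. u \<in> W \<Longrightarrow> Im (\<omega> u u) \<le> 1 \<Longrightarrow> norm u \<le> R"
  shows "\<exists>c>0. \<forall>x\<in>W. Re (- \<i> * \<omega> x x) \<ge> c * (norm x)\<^sup>2"
proof -
  interpret B: bounded_bilinear \<omega> by (rule assms(1))
  define R' where "R' = max R 1"
  have "(norm x)\<^sup>2 / R'\<^sup>2 \<le> Im (\<omega> x x)" if "x \<in> W" for x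
  proof (cases "x = 0")
    case False
    define t where "t = Im (\<omega> x x)"
    have "t > 0"
      using pos_def_Im_pos[OF \<open>pos_def \<omega> W\<close> that False] by (simp add: t_def)
    define u where "u = (1 / sqrt t) *\<^sub>R x"
    have "u \<in> W"
      using \<open>subspace W\<close> that by (simp add: u_def subspace_scale)
    moreover have "Im (\<omega> u u) = 1"
      using \<open>t > 0\<close> by (simp add: u_def t_def B.scaleR_left B.scaleR_right power2_eq_square)
    ultimately have "norm x / sqrt t \<le> R'"
      using bounded \<open>t > 0\<close> by (fastforce simp: u_def R'_def)
    then have "norm x \<le> R' * sqrt t"
      using \<open>t > 0\<close> by (simp add: divide_le_eq)
    then have "(norm x)\<^sup>2 \<le> R'\<^sup>2 * t"
      using \<open>t > 0\<close> power_mono[of "norm x" "R' * sqrt t" 2] by (simp add: power_mult_distrib)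
    then show ?thesis
      by (simp add: t_def R'_def divide_le_eq mult.commute)
  qed (simp add: B.zero_left)
  moreover have "1 / R'\<^sup>2 > 0"
    by (simp add: R'_def)
  ultimately show ?thesis
    by (intro exI[of _ "1 / R'\<^sup>2"]) simp
qed

lemma uniform_bound_if_sum_sperp_eq_UNIV:
  fixes J :: "'a::{real_inner,complete_space} \<Rightarrow> 'a"
  assumes ss: "strong_symplectic J \<omega>" and W: "csubspace J W" "pos_def \<omega> W"
    and sum: "{w + v | w v. w \<in> W \<and> v \<in> sperp \<omega> W} = UNIV"
  shows "\<exists>M. \<forall>u\<in>{u \<in> W. Im (\<omega> u u) \<le> 1}. \<forall>x. norm (\<omega> x u) \<le> M * norm x"
proof (rule uniform_boundedness)
  interpret B: bounded_bilinear \<omega>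
    using strong_symplecticD(1)[OF ss] .
  show "bounded_linear (\<lambda>x. \<omega> x u)" for u
    by (rule B.bounded_linear_left)
  fix x
  obtain w v where x: "x = w + v" and "w \<in> W" "v \<in> sperp \<omega> W"
    using sum by blast
  have "norm (\<omega> x u) \<le> Im (\<omega> w w) + 1" if "u \<in> W" "Im (\<omega> u u) \<le> 1" for u
  proof -
    have "\<omega> x u = \<omega> w u"
      using x \<open>v \<in> sperp \<omega> W\<close> that by (simp add: sperp_def B.add_left)
    then show ?thesis
      using pos_def_norm_le_Im[OF ss W \<open>w \<in> W\<close> \<open>u \<in> W\<close>] that(2) by simp
  qed
  then show "\<exists>B. \<forall>u\<in>{u \<in> W. Im (\<omega> u u) \<le> 1}. norm (\<omega> x u) \<le> B"
    by blast
qed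

lemma coercive_if_sum_sperp_eq_UNIV:
  fixes J :: "'a::{real_inner,complete_space} \<Rightarrow> 'a"
  assumes cs: "complex_structure J" and ss: "strong_symplectic J \<omega>"
    and W: "csubspace J W" "pos_def \<omega> W"
    and sum: "{w + v | w v. w \<in> W \<and> v \<in> sperp \<omega> W} = UNIV"
  shows "\<exists>c>0. \<forall>x\<in>W. Re (- \<i> * \<omega> x x) \<ge> c * (norm x)\<^sup>2"
proof -
  interpret B: bounded_bilinear \<omega>
    using strong_symplecticD(1)[OF ss] .
  obtain M where M: "\<And>u x. u \<in> W \<Longrightarrow> Im (\<omega> u u) \<le> 1 \<Longrightarrow> norm (\<omega> x u) \<le> M * norm x"
    using uniform_bound_if_sum_sperp_eq_UNIV[OF ss W sum] by blast
  obtain K where K: "\<And>x. (\<forall>y. norm (\<omega> y x) \<le> norm y) \<Longrightarrow> norm x \<le> K"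
    using strong_symplectic_bounded_inverse[OF cs ss] by blast
  define M' where "M' = max M 1"
  have "norm u \<le> K * M'" if "u \<in> W" "Im (\<omega> u u) \<le> 1" for u
  proof -
    have "norm (\<omega> y ((1 / M') *\<^sub>R u)) \<le> norm y" for y
    proof -
      have "norm (\<omega> y ((1 / M') *\<^sub>R u)) = norm (\<omega> y u) / M'"
        by (simp add: M'_def B.scaleR_right)
      also have "\<dots> \<le> M' * norm y / M'"
        using M[OF that, of y] mult_right_mono[of M M' "norm y"]
        by (intro divide_right_mono) (auto simp: M'_def)
      finally show ?thesis
        by (simp add: M'_def)
    qed
    then have "norm ((1 / M') *\<^sub>R u) \<le> K"
      using K by blast
    then show ?thesis
      by (simp add: M'_def divide_le_eq)
  qed
  then show ?thesis
    using W coercive_if_bounded_sublevel[OF B.bounded_bilinear_axioms] unfolding csubspace_def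
    by blast
qed

theorem proposition2p13:
  fixes J :: "'a::{real_inner, complete_space, second_countable_topology} \<Rightarrow> 'a"
    and \<omega> :: "'a \<Rightarrow> 'a \<Rightarrow> complex"
    and W :: "'a set"
  assumes "complex_structure J"
    and "strong_symplectic J \<omega>"
    and "signature_inf_inf J \<omega>"
    and "max_pos_def J \<omega> W"
    and "\<not> max_cpos_def J \<omega> W"
  shows "W \<inter> sperp \<omega> W = {0}
    \<and> closure {w + v | w v. w \<in> W \<and> v \<in> sperp \<omega> W} = UNIV
    \<and> {w + v | w v. w \<in> W \<and> v \<in> sperp \<omega> W} \<noteq> UNIV"
proof (intro conjI)
  have W: "csubspace J W" "closed W" "pos_def \<omega> W"
    using assms(4) by (simp_all add: max_pos_def_def)
  show trivial: "W \<inter> sperp \<omega> W = {0}"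
    using pos_def_inter_sperp[OF assms(2) _ W(3)] W(1) by (simp add: csubspace_def)
  show "closure {w + v | w v. w \<in> W \<and> v \<in> sperp \<omega> W} = UNIV"
    using closure_sum_sperp_eq_UNIV[OF assms(1,2) W(1,2) trivial] .
  show "{w + v | w v. w \<in> W \<and> v \<in> sperp \<omega> W} \<noteq> UNIV"
    using coercive_if_sum_sperp_eq_UNIV[OF assms(1,2) W(1,3)] assms(4,5)
    unfolding max_cpos_def_def by blast
qed

end
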